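(* Let $n\in\mathbb N$ with $n\ge 10$ and let $T_n$ be a tree on $n$ vertices with $\Delta(T_n)=n-4$. Suppose that for every integer $m\ge n$ and every connected graph $H\in\mathrm{Ex}(m;T_n)$ we have $\Delta(H)\le n-5$. Let $p=k(n-1)+r\ge n-1$ with $k\in\mathbb N$ and $r\in\{0,1,\ldots,n-2\}$. Then $$\mathrm{ex}(p;T_n)=\frac{(n-2)p-r(n-1-r)}2+\max\Big\{0,\Big\lfloor\frac{r(n-4-r)-3(n-1)}2\Big\rfloor\Big\}.$$
   Context: All graphs are finite simple graphs; $\Delta(G)$ is the maximum degree of $G$. For a graph $L$, $\mathrm{ex}(p;L)$ is the maximum number of edges in a graph on $p$ vertices containing no subgraph isomorphic to $L$, and $\mathrm{Ex}(p;L)$ is the set of graphs on $p$ vertices containing no copy of $L$ and having exactly $\mathrm{ex}(p;L)$ edges. $\lfloor x\rfloor$ is the greatest integer not exceeding $x$. *)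

theory Defs
  imports Complex_Main
begin

definition simple_graph :: "'a set \<Rightarrow> 'a set set \<Rightarrow> bool" where
  "simple_graph V E \<longleftrightarrow> finite V \<and> (\<forall>e\<in>E. \<exists>u v. u \<noteq> v \<and> u \<in> V \<and> v \<in> V \<and> e = {u, v})"

definition degree :: "'a set \<Rightarrow> 'a set set \<Rightarrow> 'a \<Rightarrow> nat" where
  "degree V E v = card {u \<in> V. {u, v} \<in> E}"

definition max_degree :: "'a set \<Rightarrow> 'a set set \<Rightarrow> nat" where
  "max_degree V E = Max (degree V E ` V)"

definition adj :: "'a set set \<Rightarrow> 'a \<Rightarrow> 'a \<Rightarrow> bool" where
  "adj E u v \<longleftrightarrow> {u, v} \<in> E"

definition connected_graph :: "'a set \<Rightarrow> 'a set set \<Rightarrow> bool" where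
  "connected_graph V E \<longleftrightarrow> V \<noteq> {} \<and> (\<forall>u\<in>V. \<forall>v\<in>V. (adj E)\<^sup>*\<^sup>* u v)"

definition is_tree :: "'a set \<Rightarrow> 'a set set \<Rightarrow> bool" where
  "is_tree V E \<longleftrightarrow> simple_graph V E \<and> connected_graph V E \<and> card E + 1 = card V"

definition contains_copy :: "'b set \<Rightarrow> 'b set set \<Rightarrow> 'a set \<Rightarrow> 'a set set \<Rightarrow> bool" where
  "contains_copy VL EL V E \<longleftrightarrow>
     (\<exists>f. inj_on f VL \<and> f ` VL \<subseteq> V \<and> (\<forall>e\<in>EL. f ` e \<in> E))"

text \<open>Graphs on p vertices are taken, up to isomorphism, with vertex set {0..<p}.\<close>
definition free_graphs :: "nat \<Rightarrow> 'b set \<Rightarrow> 'b set set \<Rightarrow> nat set set set" where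
  "free_graphs p VL EL = {E. simple_graph {0..<p} E \<and> \<not> contains_copy VL EL {0..<p} E}"

definition ex :: "nat \<Rightarrow> 'b set \<Rightarrow> 'b set set \<Rightarrow> nat" where
  "ex p VL EL = Max (card ` free_graphs p VL EL)"

definition Ex :: "nat \<Rightarrow> 'b set \<Rightarrow> 'b set set \<Rightarrow> nat set set set" where
  "Ex p VL EL = {E \<in> free_graphs p VL EL. card E = ex p VL EL}"

end

theory Submission
  imports Defs
begin

text \<open>Put N = n - 1. Two constructions avoid T_n: disjoint copies of K_N together with a clique on the
  remaining p mod N vertices (every component has fewer than n vertices), and the same graph with the
  last K_N and the remainder replaced by a circulant graph on N + p mod N vertices of maximum degree
  n - 5 < \<Delta>(T_n). Let \<phi>(p) be the larger of the two edge counts. Conversely, ex(p; T_n) \<le> \<phi>(p) by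
  induction on p: a disconnected extremal graph splits into two T_n-free graphs and \<phi> is superadditive,
  while a connected extremal graph on at least n vertices has maximum degree at most n - 5 by
  hypothesis, hence at most (n - 5) p / 2 edges. Evaluating \<phi> gives the formula; the floor term is the
  gain of the second construction over the first.\<close>

lemma simple_graph_edgeE:
  assumes "simple_graph V E" "e \<in> E"
  obtains u v where "u \<noteq> v" "u \<in> V" "v \<in> V" "e = {u, v}"
  using assms unfolding simple_graph_def by blast

lemma simple_graph_edge_subset: "simple_graph V E \<Longrightarrow> e \<in> E \<Longrightarrow> e \<subseteq> V \<and> e \<noteq> {}"
  by (auto elim: simple_graph_edgeE)

lemma simple_graph_finite_edges:
  assumes "simple_graph V E"
  shows "finite E"
proof (rule finite_subset)
  show "E \<subseteq> Pow V" using simple_graph_edge_subset[OF assms] by auto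
  show "finite (Pow V)" using assms unfolding simple_graph_def by simp
qed

lemma simple_graph_restrict:
  assumes "simple_graph V E" "V' \<subseteq> V" "\<forall>e\<in>E'. e \<in> E \<and> e \<subseteq> V'"
  shows "simple_graph V' E'"
  unfolding simple_graph_def
proof (intro conjI ballI)
  show "finite V'" using assms(1,2) unfolding simple_graph_def by (blast intro: finite_subset)
  fix e assume "e \<in> E'"
  with assms(3) have "e \<in> E" "e \<subseteq> V'" by auto
  with assms(1) show "\<exists>u v. u \<noteq> v \<and> u \<in> V' \<and> v \<in> V' \<and> e = {u, v}"
    by (metis insert_subset simple_graph_edgeE)
qed

lemma simple_graph_Un:
  "simple_graph V1 E1 \<Longrightarrow> simple_graph V2 E2 \<Longrightarrow> simple_graph (V1 \<union> V2) (E1 \<union> E2)"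
  unfolding simple_graph_def by (metis Un_iff finite_Un)

lemma simple_graph_image:
  assumes "inj_on g V" "simple_graph V E"
  shows "simple_graph (g ` V) ((`) g ` E)"
  unfolding simple_graph_def
proof (intro conjI ballI)
  show "finite (g ` V)" using assms(2) unfolding simple_graph_def by simp
  fix e' assume "e' \<in> (`) g ` E"
  then obtain u v where "u \<noteq> v" "u \<in> V" "v \<in> V" "e' = {g u, g v}"
    using assms(2) by (auto elim: simple_graph_edgeE)
  with assms(1) show "\<exists>x y. x \<noteq> y \<and> x \<in> g ` V \<and> y \<in> g ` V \<and> e' = {x, y}"
    by (auto dest: inj_onD)
qed

lemma card_image_edges:
  assumes "inj_on g V" "simple_graph V E"
  shows "card ((`) g ` E) = card E"
proof (rule card_image)
  show "inj_on ((`) g) E"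
  proof (rule inj_onI)
    fix x y assume "x \<in> E" "y \<in> E" "g ` x = g ` y"
    then show "x = y"
      using inj_on_image_eq_iff[OF assms(1)] simple_graph_edge_subset[OF assms(2)] by blast
  qed
qed

lemma degree_le_max_degree: "finite V \<Longrightarrow> v \<in> V \<Longrightarrow> degree V E v \<le> max_degree V E"
  unfolding max_degree_def by (intro Max_ge) auto

lemma max_degree_attained:
  assumes "finite V" "V \<noteq> {}"
  obtains v where "v \<in> V" "degree V E v = max_degree V E"
proof -
  have "max_degree V E \<in> degree V E ` V"
    unfolding max_degree_def using assms by (intro Max_in) auto
  then show thesis using that by auto
qed

lemma degree_eq_card_incident_edges:
  assumes "simple_graph V E"
  shows "degree V E v = card {e \<in> E. v \<in> e}"
proof -
  have "bij_betw (\<lambda>u. {u, v}) {u \<in> V. {u, v} \<in> E} {e \<in> E. v \<in> e}"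
  proof (rule bij_betwI')
    fix y assume "y \<in> {e \<in> E. v \<in> e}"
    then obtain a b where "a \<in> V" "b \<in> V" "y = {a, b}" "y \<in> E" "v \<in> y"
      using assms by (auto elim: simple_graph_edgeE)
    then show "\<exists>x\<in>{u \<in> V. {u, v} \<in> E}. y = {x, v}"
      by (cases "v = a") (auto simp: insert_commute)
  qed (auto simp: doubleton_eq_iff)
  then show ?thesis unfolding degree_def by (rule bij_betw_same_card)
qed

lemma sum_degree_eq_twice_card_edges:
  assumes "simple_graph V E"
  shows "(\<Sum>v\<in>V. degree V E v) = 2 * card E"
proof -
  have fin: "finite V" "finite E"
    using assms simple_graph_finite_edges unfolding simple_graph_def by auto
  have "(\<Sum>v\<in>V. degree V E v) = (\<Sum>v\<in>V. \<Sum>e\<in>E. if v \<in> e then 1 else 0)"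
    by (auto simp: degree_eq_card_incident_edges[OF assms] sum.If_cases fin
        intro!: sum.cong arg_cong[where f = card])
  also have "\<dots> = (\<Sum>e\<in>E. \<Sum>v\<in>V. if v \<in> e then 1 else 0)"
    by (rule sum.swap)
  also have "\<dots> = (\<Sum>e\<in>E. 2)"
  proof (rule sum.cong)
    fix e assume "e \<in> E"
    then obtain a b where "a \<noteq> b" "a \<in> V" "b \<in> V" "e = {a, b}"
      using assms by (auto elim: simple_graph_edgeE)
    then have "V \<inter> e = {a, b}" by auto
    then show "(\<Sum>v\<in>V. if v \<in> e then 1 else 0) = (2::nat)"
      using \<open>a \<noteq> b\<close> by (simp add: sum.If_cases fin)
  qed simp
  finally show ?thesis by simp
qed

lemma card_edges_le_degree_bound:
  assumes "simple_graph V E" "\<forall>v\<in>V. degree V E v \<le> d"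
  shows "2 * card E \<le> card V * d"
proof -
  have "(\<Sum>v\<in>V. degree V E v) \<le> (\<Sum>v\<in>V. d)"
    using assms(2) by (intro sum_mono) auto
  then show ?thesis using sum_degree_eq_twice_card_edges[OF assms(1)] by simp
qed

lemma card_edges_le_choose_two:
  assumes "simple_graph V E"
  shows "card E \<le> card V choose 2"
proof -
  have fin: "finite V" using assms unfolding simple_graph_def by simp
  have "E \<subseteq> {B. B \<subseteq> V \<and> card B = 2}"
    using assms by (auto elim!: simple_graph_edgeE)
  then have "card E \<le> card {B. B \<subseteq> V \<and> card B = 2}"
    by (intro card_mono) (simp_all add: fin)
  then show ?thesis by (simp add: n_subsets[OF fin])
qed

lemma simple_graph_complete: "finite V \<Longrightarrow> simple_graph V {e. e \<subseteq> V \<and> card e = 2}"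
  unfolding simple_graph_def by (auto simp: card_2_iff)

lemma contains_copy_mono:
  "contains_copy VL EL V' E' \<Longrightarrow> V' \<subseteq> V \<Longrightarrow> E' \<subseteq> E \<Longrightarrow> contains_copy VL EL V E"
  unfolding contains_copy_def by (meson subset_trans subsetD)

lemma contains_copy_image_iff:
  assumes g: "inj_on g V" and G: "simple_graph V E"
  shows "contains_copy VL EL (g ` V) ((`) g ` E) \<longleftrightarrow> contains_copy VL EL V E"
proof
  assume "contains_copy VL EL V E"
  then obtain f where f: "inj_on f VL" "f ` VL \<subseteq> V" "\<forall>e\<in>EL. f ` e \<in> E"
    unfolding contains_copy_def by auto
  have "inj_on (g \<circ> f) VL" using f g by (simp add: comp_inj_on inj_on_subset)
  moreover have "(g \<circ> f) ` VL \<subseteq> g ` V" using f by (auto simp: image_comp[symmetric])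
  moreover have "\<forall>e\<in>EL. (g \<circ> f) ` e \<in> (`) g ` E" using f by (auto simp: image_comp)
  ultimately show "contains_copy VL EL (g ` V) ((`) g ` E)" unfolding contains_copy_def by blast
next
  assume "contains_copy VL EL (g ` V) ((`) g ` E)"
  then obtain f where f: "inj_on f VL" "f ` VL \<subseteq> g ` V" "\<forall>e\<in>EL. f ` e \<in> (`) g ` E"
    unfolding contains_copy_def by auto
  define h where "h = the_inv_into V g \<circ> f"
  have "inj_on h VL" unfolding h_def using f g
    by (meson comp_inj_on inj_on_subset inj_on_the_inv_into)
  moreover have "h ` VL \<subseteq> V" unfolding h_def using f g
    by (auto intro!: the_inv_into_into)
  moreover have "h ` e \<in> E" if "e \<in> EL" for e
  proof -
    obtain e' where e': "e' \<in> E" "f ` e = g ` e'" using f \<open>e \<in> EL\<close> by auto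
    have "h ` e = the_inv_into V g ` g ` e'"
      unfolding h_def image_comp[symmetric] e'(2) ..
    also have "\<dots> = e'"
      using simple_graph_edge_subset[OF G e'(1)] g
      by (simp add: image_image subset_iff the_inv_into_f_f cong: image_cong)
    finally show ?thesis using e' by simp
  qed
  ultimately show "contains_copy VL EL V E" unfolding contains_copy_def by blast
qed

lemma card_le_if_contains_copy:
  assumes "finite V" "contains_copy VL EL V E"
  shows "card VL \<le> card V"
proof -
  obtain f where "inj_on f VL" "f ` VL \<subseteq> V" using assms(2) unfolding contains_copy_def by blast
  then show ?thesis using card_inj_on_le[OF _ _ assms(1)] by blast
qed

lemma degree_le_if_contains_copy:
  assumes "finite V" "contains_copy VL EL V E" "v \<in> VL"
  obtains w where "w \<in> V" "degree VL EL v \<le> degree V E w"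
proof -
  obtain f where f: "inj_on f VL" "f ` VL \<subseteq> V" "\<forall>e\<in>EL. f ` e \<in> E"
    using assms(2) unfolding contains_copy_def by auto
  let ?N = "{u \<in> VL. {u, v} \<in> EL}"
  have "f ` ?N \<subseteq> {w \<in> V. {w, f v} \<in> E}"
  proof
    fix w assume "w \<in> f ` ?N"
    then obtain u where u: "u \<in> VL" "{u, v} \<in> EL" "w = f u" by auto
    then have "{w, f v} = f ` {u, v}" by simp
    then show "w \<in> {w \<in> V. {w, f v} \<in> E}" using f u by auto
  qed
  then have "card (f ` ?N) \<le> degree V E (f v)"
    unfolding degree_def using assms(1) by (intro card_mono) auto
  moreover have "card (f ` ?N) = degree VL EL v"
    unfolding degree_def by (rule card_image) (rule inj_on_subset[OF f(1)], auto)
  ultimately show thesis using that f(2) assms(3) by auto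
qed

lemma copy_stays_in_part:
  assumes L: "simple_graph VL EL" "connected_graph VL EL"
    and f: "\<forall>e\<in>EL. f ` e \<in> E1 \<union> E2"
    and E1: "\<forall>e\<in>E1. e \<subseteq> V1" and E2: "\<forall>e\<in>E2. e \<subseteq> V2"
    and disj: "V1 \<inter> V2 = {}" and x: "x \<in> VL" "f x \<in> V1"
  shows "f ` VL \<subseteq> V1" "\<forall>e\<in>EL. f ` e \<in> E1"
proof -
  have "f y \<in> V1" if "(adj EL)\<^sup>*\<^sup>* x y" for y
    using that
  proof (induction rule: rtranclp_induct)
    case (step y z)
    then have "{y, z} \<in> EL" unfolding adj_def by simp
    then have "{f y, f z} \<in> E1 \<union> E2" using f by auto
    then have "{f y, f z} \<subseteq> V1 \<or> {f y, f z} \<subseteq> V2" using E1 E2 by auto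
    then show ?case using step.IH disj by auto
  qed (use x in simp)
  then show sub: "f ` VL \<subseteq> V1"
    using L(2) x(1) unfolding connected_graph_def by blast
  show "\<forall>e\<in>EL. f ` e \<in> E1"
  proof
    fix e assume e: "e \<in> EL"
    then have "f ` e \<subseteq> V1" "f ` e \<noteq> {}"
      using simple_graph_edge_subset[OF L(1)] sub by blast+
    then have "f ` e \<notin> E2" using E2 disj by blast
    then show "f ` e \<in> E1" using f e by blast
  qed
qed

lemma contains_copy_disjoint_UnD:
  assumes L: "simple_graph VL EL" "connected_graph VL EL"
    and E1: "\<forall>e\<in>E1. e \<subseteq> V1" and E2: "\<forall>e\<in>E2. e \<subseteq> V2" and disj: "V1 \<inter> V2 = {}"
    and copy: "contains_copy VL EL (V1 \<union> V2) (E1 \<union> E2)"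
  shows "contains_copy VL EL V1 E1 \<or> contains_copy VL EL V2 E2"
proof -
  obtain f where f: "inj_on f VL" "f ` VL \<subseteq> V1 \<union> V2" "\<forall>e\<in>EL. f ` e \<in> E1 \<union> E2"
    using copy unfolding contains_copy_def by auto
  obtain x where x: "x \<in> VL" using L(2) unfolding connected_graph_def by auto
  show ?thesis
  proof (cases "f x \<in> V1")
    case True
    from copy_stays_in_part[OF L f(3) E1 E2 disj x True] f(1) show ?thesis
      unfolding contains_copy_def by blast
  next
    case False
    then have "f x \<in> V2" using f(2) x by auto
    moreover have "\<forall>e\<in>EL. f ` e \<in> E2 \<union> E1" "V2 \<inter> V1 = {}" using f(3) disj by auto
    ultimately have "f ` VL \<subseteq> V2" "\<forall>e\<in>EL. f ` e \<in> E2"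
      using copy_stays_in_part[OF L _ E2 E1 _ x] by blast+
    with f(1) show ?thesis unfolding contains_copy_def by blast
  qed
qed

section \<open>Extremal numbers\<close>

lemma finite_free_graphs: "finite (free_graphs p VL EL)"
proof (rule finite_subset)
  show "free_graphs p VL EL \<subseteq> Pow (Pow {0..<p})"
    unfolding free_graphs_def using simple_graph_edge_subset by blast
qed simp

lemma card_le_ex: "E \<in> free_graphs p VL EL \<Longrightarrow> card E \<le> ex p VL EL"
  unfolding ex_def using finite_free_graphs by (intro Max_ge) auto

lemma Ex_nonempty:
  assumes "EL \<noteq> {}"
  obtains E where "E \<in> Ex p VL EL"
proof -
  have "{} \<in> free_graphs p VL EL"
    using assms unfolding free_graphs_def simple_graph_def contains_copy_def by auto
  then have "ex p VL EL \<in> card ` free_graphs p VL EL"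
    unfolding ex_def using finite_free_graphs by (intro Max_in) auto
  then show thesis using that unfolding Ex_def by auto
qed

lemma card_le_ex_if_free:
  assumes G: "simple_graph V E" and free: "\<not> contains_copy VL EL V E"
  shows "card E \<le> ex (card V) VL EL"
proof -
  obtain g where "bij_betw g V {0..<card V}"
    using G ex_bij_betw_finite_nat unfolding simple_graph_def by blast
  then have g: "inj_on g V" "g ` V = {0..<card V}" by (auto simp: bij_betw_def)
  have "(`) g ` E \<in> free_graphs (card V) VL EL"
    unfolding free_graphs_def
    using simple_graph_image[OF g(1) G] contains_copy_image_iff[OF g(1) G, of VL EL] free g(2) by simp
  then show ?thesis using card_le_ex card_image_edges[OF g(1) G] by metis
qed

lemma ex_le_choose_two:
  assumes "EL \<noteq> {}"
  shows "ex p VL EL \<le> p choose 2"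
proof -
  obtain E where "E \<in> Ex p VL EL" using Ex_nonempty[OF assms] .
  then show ?thesis
    using card_edges_le_choose_two[of "{0..<p}" E] unfolding Ex_def free_graphs_def by auto
qed

lemma choose_two_le_ex:
  assumes "p < card VL"
  shows "p choose 2 \<le> ex p VL EL"
proof -
  let ?K = "{e. e \<subseteq> {0..<p} \<and> card e = 2}"
  have "\<not> contains_copy VL EL {0..<p} ?K"
    using card_le_if_contains_copy assms by fastforce
  then have "?K \<in> free_graphs p VL EL"
    unfolding free_graphs_def using simple_graph_complete by auto
  then show ?thesis using card_le_ex n_subsets[of "{0..<p}" 2] by fastforce
qed

context
  fixes VL :: "'b set" and EL :: "'b set set"
  assumes simple: "simple_graph VL EL" and connected: "connected_graph VL EL"
    and nonempty: "EL \<noteq> {}"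
begin

lemma ex_superadditive: "ex a VL EL + ex b VL EL \<le> ex (a + b) VL EL"
proof -
  obtain E1 where E1: "E1 \<in> Ex a VL EL" using Ex_nonempty[OF nonempty] .
  obtain E2 where E2: "E2 \<in> Ex b VL EL" using Ex_nonempty[OF nonempty] .
  have G1: "simple_graph {0..<a} E1" and free1: "\<not> contains_copy VL EL {0..<a} E1"
    using E1 unfolding Ex_def free_graphs_def by auto
  have G2: "simple_graph {0..<b} E2" and free2: "\<not> contains_copy VL EL {0..<b} E2"
    using E2 unfolding Ex_def free_graphs_def by auto
  define g where "g = (\<lambda>x::nat. x + a)"
  have g: "inj_on g {0..<b}" "g ` {0..<b} = {a..<a + b}"
    unfolding g_def by (auto simp: add.commute)
  define E2' where "E2' = (`) g ` E2"
  have G2': "simple_graph {a..<a + b} E2'"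
    using simple_graph_image[OF g(1) G2] unfolding E2'_def g(2) .
  have free2': "\<not> contains_copy VL EL {a..<a + b} E2'"
    using contains_copy_image_iff[OF g(1) G2, of VL EL] free2 unfolding E2'_def g(2) by simp
  have parts: "{0..<a} \<union> {a..<a + b} = {0..<a + b}" "{0..<a} \<inter> {a..<a + b} = {}" by auto
  have edges: "\<forall>e\<in>E1. e \<subseteq> {0..<a}" "\<forall>e\<in>E2'. e \<subseteq> {a..<a + b}"
    using simple_graph_edge_subset[OF G1] simple_graph_edge_subset[OF G2'] by blast+
  then have "\<not> contains_copy VL EL ({0..<a} \<union> {a..<a + b}) (E1 \<union> E2')"
    using contains_copy_disjoint_UnD[OF simple connected edges parts(2)] free1 free2' by blast
  moreover have "simple_graph {0..<a + b} (E1 \<union> E2')"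
    using simple_graph_Un[OF G1 G2'] parts(1) by simp
  ultimately have "card (E1 \<union> E2') \<le> ex (a + b) VL EL"
    by (intro card_le_ex) (simp add: free_graphs_def parts(1))
  moreover have "E1 \<inter> E2' = {}"
    using simple_graph_edge_subset[OF G1] simple_graph_edge_subset[OF G2'] parts(2) by blast
  then have "card (E1 \<union> E2') = card E1 + card E2'"
    by (intro card_Un_disjoint simple_graph_finite_edges[OF G1] simple_graph_finite_edges[OF G2'])
  moreover have "card E2' = card E2"
    unfolding E2'_def by (rule card_image_edges[OF g(1) G2])
  ultimately show ?thesis using E1 E2 unfolding Ex_def by simp
qed

lemma ex_mult_le: "k * ex m VL EL \<le> ex (k * m) VL EL"
proof (induction k)
  case (Suc k)
  then show ?case using ex_superadditive[of m "k * m"] by simp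
qed simp

end

lemma disconnected_graph_split:
  assumes G: "simple_graph V E" and "V \<noteq> {}" and "\<not> connected_graph V E"
  obtains C where "C \<subseteq> V" "C \<noteq> {}" "V - C \<noteq> {}" "\<forall>e\<in>E. e \<subseteq> C \<or> e \<subseteq> V - C"
proof -
  obtain u w where uw: "u \<in> V" "w \<in> V" "\<not> (adj E)\<^sup>*\<^sup>* u w"
    using assms(2,3) unfolding connected_graph_def by blast
  define C where "C = {x \<in> V. (adj E)\<^sup>*\<^sup>* u x}"
  have "e \<subseteq> C \<or> e \<subseteq> V - C" if "e \<in> E" for e
  proof -
    obtain x y where xy: "x \<in> V" "y \<in> V" "e = {x, y}"
      using G \<open>e \<in> E\<close> by (auto elim: simple_graph_edgeE)
    have "adj E x y" "adj E y x"
      using \<open>e \<in> E\<close> xy(3) unfolding adj_def by (simp_all add: insert_commute)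
    then have "x \<in> C \<longleftrightarrow> y \<in> C"
      unfolding C_def using xy by (auto intro: rtranclp.rtrancl_into_rtrancl)
    then show ?thesis using xy by auto
  qed
  moreover have "u \<in> C" "w \<in> V - C" unfolding C_def using uw by auto
  ultimately show thesis using that[of C] unfolding C_def by blast
qed

lemma card_edges_le_ex_parts:
  assumes G: "simple_graph V E" and free: "\<not> contains_copy VL EL V E"
    and C: "C \<subseteq> V" "\<forall>e\<in>E. e \<subseteq> C \<or> e \<subseteq> V - C"
  shows "card E \<le> ex (card C) VL EL + ex (card (V - C)) VL EL"
proof -
  define E1 where "E1 = {e \<in> E. e \<subseteq> C}"
  define E2 where "E2 = {e \<in> E. e \<subseteq> V - C}"
  have G1: "simple_graph C E1" and G2: "simple_graph (V - C) E2"
    using simple_graph_restrict[OF G] C(1) unfolding E1_def E2_def by auto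
  have "E1 \<subseteq> E" "E2 \<subseteq> E" unfolding E1_def E2_def by auto
  then have free1: "\<not> contains_copy VL EL C E1" and free2: "\<not> contains_copy VL EL (V - C) E2"
    using free contains_copy_mono[OF _ C(1)] contains_copy_mono[OF _ Diff_subset] by blast+
  have "E = E1 \<union> E2" "E1 \<inter> E2 = {}"
    using C(2) simple_graph_edge_subset[OF G] unfolding E1_def E2_def by blast+
  then have "card E = card E1 + card E2"
    using simple_graph_finite_edges[OF G1] simple_graph_finite_edges[OF G2] by (simp add: card_Un_disjoint)
  then show ?thesis
    using card_le_ex_if_free[OF G1 free1] card_le_ex_if_free[OF G2 free2] by linarith
qed

lemma ex_le_split_if_disconnected_extremal:
  assumes E: "E \<in> Ex p VL EL" and "0 < p" and "\<not> connected_graph {0..<p} E"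
  obtains a b where "0 < a" "0 < b" "a + b = p" "ex p VL EL \<le> ex a VL EL + ex b VL EL"
proof -
  have G: "simple_graph {0..<p} E" and free: "\<not> contains_copy VL EL {0..<p} E"
    and card: "card E = ex p VL EL"
    using E unfolding Ex_def free_graphs_def by auto
  obtain C where C: "C \<subseteq> {0..<p}" "C \<noteq> {}" "{0..<p} - C \<noteq> {}"
      "\<forall>e\<in>E. e \<subseteq> C \<or> e \<subseteq> {0..<p} - C"
    using disconnected_graph_split[OF G] assms(2,3) by auto
  have "card C + card ({0..<p} - C) = p"
    using C(1) card_Diff_subset[of C "{0..<p}"] card_mono[OF _ C(1)] by (simp add: finite_subset)
  moreover have "0 < card C" "0 < card ({0..<p} - C)"
    using C(1-3) by (auto simp: card_gt_0_iff intro: finite_subset)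
  ultimately show thesis
    using that card_edges_le_ex_parts[OF G free C(1,4)] card by simp
qed

lemma extremal_sparse_or_split:
  assumes "EL \<noteq> {}" "0 < p"
    and degree: "\<forall>E\<in>Ex p VL EL. connected_graph {0..<p} E \<longrightarrow> max_degree {0..<p} E \<le> d"
  obtains (sparse) "2 * ex p VL EL \<le> p * d"
    | (split) a b where "0 < a" "0 < b" "a + b = p" "ex p VL EL \<le> ex a VL EL + ex b VL EL"
proof -
  obtain E where E: "E \<in> Ex p VL EL" using Ex_nonempty[OF assms(1)] .
  show thesis
  proof (cases "connected_graph {0..<p} E")
    case True
    have G: "simple_graph {0..<p} E" and card: "card E = ex p VL EL"
      using E unfolding Ex_def free_graphs_def by auto
    have "\<forall>v\<in>{0..<p}. degree {0..<p} E v \<le> d"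
      using degree E True degree_le_max_degree[of "{0..<p}"] by (meson finite_atLeastLessThan le_trans)
    then show thesis using sparse card_edges_le_degree_bound[OF G] card by simp
  next
    case False
    then show thesis using ex_le_split_if_disconnected_extremal[OF E assms(2)] split by blast
  qed
qed

section \<open>A circulant graph of bounded degree\<close>

definition circulant_edges :: "nat \<Rightarrow> nat \<Rightarrow> nat set set" where
  "circulant_edges q d =
     (\<lambda>(i, j). {i, (i + j) mod q}) ` ({0..<q} \<times> {1..d div 2})
     \<union> (if odd d then (\<lambda>i. {i, i + q div 2}) ` {0..<q div 2} else {})"

lemma add_mod_eq_if:
  "i < (q::nat) \<Longrightarrow> j < q \<Longrightarrow> (i + j) mod q = (if i + j < q then i + j else i + j - q)"
  by (cases "i + j < q") (simp_all add: le_mod_geq)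

context
  fixes q d :: nat
  assumes dq: "d < q"
begin

private lemma twice_half_d_less: "2 * (d div 2) < q" using dq by linarith

private lemma half_d_less_half_q: "odd d \<Longrightarrow> d div 2 < q div 2" using dq by presburger

lemma simple_graph_circulant: "simple_graph {0..<q} (circulant_edges q d)"
  unfolding simple_graph_def
proof (intro conjI ballI)
  fix e assume "e \<in> circulant_edges q d"
  then consider (cycle) i j where "i < q" "1 \<le> j" "j \<le> d div 2" "e = {i, (i + j) mod q}"
    | (matching) i where "odd d" "i < q div 2" "e = {i, i + q div 2}"
    unfolding circulant_edges_def by (auto split: if_splits)
  then show "\<exists>u v. u \<noteq> v \<and> u \<in> {0..<q} \<and> v \<in> {0..<q} \<and> e = {u, v}"
  proof cases
    case cycle
    then show ?thesis using twice_half_d_less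
      by (intro exI[of _ i] exI[of _ "(i + j) mod q"]) (auto simp: add_mod_eq_if)
  next
    case matching
    then show ?thesis using half_d_less_half_q by (intro exI[of _ i] exI[of _ "i + q div 2"]) auto
  qed
qed simp

lemma card_circulant: "card (circulant_edges q d) = d * q div 2"
proof -
  have "inj_on (\<lambda>(i, j). {i, (i + j) mod q}) ({0..<q} \<times> {1..d div 2})"
  proof (rule inj_onI, clarify)
    fix i j i' j'
    assume "i \<in> {0..<q}" "j \<in> {1..d div 2}" "i' \<in> {0..<q}" "j' \<in> {1..d div 2}"
      "{i, (i + j) mod q} = {i', (i' + j') mod q}"
    then show "i = i' \<and> j = j'"
      using twice_half_d_less by (auto simp: add_mod_eq_if doubleton_eq_iff split: if_splits)
  qed
  then have cycle: "card ((\<lambda>(i, j). {i, (i + j) mod q}) ` ({0..<q} \<times> {1..d div 2})) = q * (d div 2)"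
    by (simp add: card_image card_cartesian_product)
  have "inj_on (\<lambda>i. {i, i + q div 2}) {0..<q div 2}"
    by (rule inj_onI) (auto simp: doubleton_eq_iff)
  then have matching: "card ((\<lambda>i. {i, i + q div 2}) ` {0..<q div 2}) = q div 2" by (simp add: card_image)
  show ?thesis
  proof (cases "odd d")
    case True
    have "(\<lambda>(i, j). {i, (i + j) mod q}) ` ({0..<q} \<times> {1..d div 2})
        \<inter> (\<lambda>i. {i, i + q div 2}) ` {0..<q div 2} = {}"
      using half_d_less_half_q[OF True] twice_half_d_less
      by (auto simp: add_mod_eq_if doubleton_eq_iff split: if_splits)
    then have "card (circulant_edges q d) = q * (d div 2) + q div 2"
      unfolding circulant_edges_def using True cycle matching by (simp add: card_Un_disjoint)
    moreover obtain t where "d = 2 * t + 1" using True by (rule oddE)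
    ultimately show ?thesis by (simp add: algebra_simps)
  next
    case False
    then obtain t where "d = 2 * t" by (auto elim: evenE)
    then show ?thesis unfolding circulant_edges_def using False cycle by (simp add: algebra_simps)
  qed
qed

lemma degree_circulant_le:
  assumes v: "v < q"
  shows "degree {0..<q} (circulant_edges q d) v \<le> d"
proof -
  let ?fwd = "(\<lambda>j. (v + j) mod q) ` {1..d div 2}"
  let ?bwd = "(\<lambda>j. (v + (q - j)) mod q) ` {1..d div 2}"
  let ?opp = "if odd d then {if v < q div 2 then v + q div 2 else v - q div 2} else {}"
  have "{u \<in> {0..<q}. {u, v} \<in> circulant_edges q d} \<subseteq> ?fwd \<union> ?bwd \<union> ?opp"
  proof
    fix u assume "u \<in> {u \<in> {0..<q}. {u, v} \<in> circulant_edges q d}"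
    then have u: "u < q" "{u, v} \<in> circulant_edges q d" by auto
    then consider (cycle) i j where "i < q" "1 \<le> j" "j \<le> d div 2" "{u, v} = {i, (i + j) mod q}"
      | (matching) i where "odd d" "i < q div 2" "{u, v} = {i, i + q div 2}"
      unfolding circulant_edges_def by (auto split: if_splits)
    then show "u \<in> ?fwd \<union> ?bwd \<union> ?opp"
    proof cases
      case cycle
      then have "(u = i \<and> v = (i + j) mod q) \<or> (v = i \<and> u = (i + j) mod q)"
        by (auto simp: doubleton_eq_iff)
      then have "u = (v + (q - j)) mod q \<or> u = (v + j) mod q"
        using cycle twice_half_d_less v by (auto simp: add_mod_eq_if split: if_splits)
      then show ?thesis using cycle by auto
    next
      case matching
      then show ?thesis by (auto simp: doubleton_eq_iff)
    qed
  qed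
  then have "degree {0..<q} (circulant_edges q d) v \<le> card (?fwd \<union> ?bwd \<union> ?opp)"
    unfolding degree_def by (intro card_mono) auto
  also have "\<dots> \<le> card ?fwd + card ?bwd + card ?opp"
    by (meson card_Un_le add_le_mono le_refl order_trans)
  also have "\<dots> \<le> d div 2 + d div 2 + (if odd d then 1 else 0)"
    by (intro add_mono) (auto intro: card_image_le[THEN order_trans])
  also have "\<dots> = d" by presburger
  finally show ?thesis .
qed

end

lemma sparse_le_ex:
  assumes "d < q" "v \<in> VL" "d < degree VL EL v"
  shows "d * q div 2 \<le> ex q VL EL"
proof -
  have "\<not> contains_copy VL EL {0..<q} (circulant_edges q d)"
    using degree_le_if_contains_copy[of "{0..<q}" VL EL _ v] degree_circulant_le[OF assms(1)] assms(2,3)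
    by (metis atLeastLessThan_iff finite_atLeastLessThan order.trans leD)
  then have "circulant_edges q d \<in> free_graphs q VL EL"
    unfolding free_graphs_def using simple_graph_circulant[OF assms(1)] by simp
  then show ?thesis using card_le_ex card_circulant[OF assms(1)] by metis
qed

section \<open>The candidate extremal function\<close>

lemma choose_two_int: "2 * int (x choose 2) = int x * (int x - 1)"
proof -
  have "even (x * (x - 1))" by (cases x) simp_all
  then have "2 * (x choose 2) = x * (x - 1)"
    by (simp add: choose_two)
  then show ?thesis by (cases x) (simp_all add: algebra_simps flip: of_nat_mult)
qed

lemma choose_two_add_le: "(a choose 2) + (b choose 2) \<le> (a + b) choose 2"
proof -
  have "2 * int (a choose 2) + 2 * int (b choose 2) \<le> 2 * int ((a + b) choose 2)"
    unfolding choose_two_int by (simp add: algebra_simps)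
  then show ?thesis by simp
qed

lemma choose_two_exchange:
  assumes "r1 \<le> N" "r2 \<le> N" "N \<le> r1 + r2"
  shows "(r1 choose 2) + (r2 choose 2) \<le> (N choose 2) + ((r1 + r2 - N) choose 2)"
proof -
  have "0 \<le> (int N - int r1) * (int N - int r2)" using assms by simp
  moreover have "int N * (int N - 1) + (int r1 + int r2 - int N) * (int r1 + int r2 - int N - 1)
      - int r1 * (int r1 - 1) - int r2 * (int r2 - 1) = 2 * ((int N - int r1) * (int N - int r2))"
    by (simp add: algebra_simps)
  ultimately have "2 * int (r1 choose 2) + 2 * int (r2 choose 2)
      \<le> 2 * int (N choose 2) + 2 * int ((r1 + r2 - N) choose 2)"
    unfolding choose_two_int using assms(3) by (simp add: of_nat_diff)
  then show ?thesis by simp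
qed

locale extremal_function =
  fixes N :: nat
  assumes four_le_N: "4 \<le> N"
begin

definition sparse_edges :: "nat \<Rightarrow> nat" where
  "sparse_edges q = (N - 4) * q div 2"

text \<open>clique_edges p counts p div N disjoint copies of K_N and a clique on the remaining p mod N
  vertices; mixed_edges p replaces the last K_N and that clique by the circulant graph of degree
  N - 4 on N + p mod N vertices.\<close>

definition clique_edges :: "nat \<Rightarrow> nat" where
  "clique_edges p = p div N * (N choose 2) + (p mod N choose 2)"

definition mixed_edges :: "nat \<Rightarrow> nat" where
  "mixed_edges p =
     (if N \<le> p then (p div N - 1) * (N choose 2) + sparse_edges (N + p mod N) else 0)"

definition phi :: "nat \<Rightarrow> nat" where
  "phi p = max (clique_edges p) (mixed_edges p)"

lemma sparse_edges_int_le: "2 * int (sparse_edges q) \<le> (int N - 4) * int q"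
proof -
  have "int (2 * sparse_edges q) \<le> int ((N - 4) * q)"
    unfolding sparse_edges_def of_nat_le_iff by simp
  then show ?thesis using four_le_N by (simp add: of_nat_diff)
qed

lemma sparse_edges_int_ge: "(int N - 4) * int q \<le> 2 * int (sparse_edges q) + 1"
proof -
  have "int ((N - 4) * q) \<le> int (2 * sparse_edges q + 1)"
    unfolding sparse_edges_def of_nat_le_iff by simp
  then show ?thesis using four_le_N by (simp add: of_nat_diff)
qed

lemma sparse_edges_superadditive: "sparse_edges a + sparse_edges b \<le> sparse_edges (a + b)"
  unfolding sparse_edges_def add_mult_distrib2 by presburger

lemma choose_two_le_sparse_edges: "r \<le> N - 3 \<Longrightarrow> r choose 2 \<le> sparse_edges r"
  unfolding sparse_edges_def choose_two by (intro div_le_mono) (auto simp: mult.commute)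

lemma exchange_clique_sparse:
  assumes "r1 + r2 < N"
  shows "(r1 choose 2) + sparse_edges (N + r2) \<le> (N choose 2) + ((r1 + r2) choose 2)
    \<or> (r1 choose 2) + sparse_edges (N + r2) \<le> sparse_edges (N + r1 + r2)"
proof (cases "r1 \<le> N - 3")
  case True
  then have "(r1 choose 2) + sparse_edges (N + r2) \<le> sparse_edges r1 + sparse_edges (N + r2)"
    using choose_two_le_sparse_edges by simp
  also have "\<dots> \<le> sparse_edges (N + r1 + r2)"
    using sparse_edges_superadditive[of r1 "N + r2"] by (simp add: add_ac)
  finally show ?thesis ..
next
  case False
  then have "r2 \<le> 1" using assms by linarith
  then have "int N * int r2 \<le> int N * 1" by (intro mult_left_mono) auto
  then have "(int N - 4) * int (N + r2) \<le> int N * (int N - 1)"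
    by (simp add: algebra_simps)
  then have "sparse_edges (N + r2) \<le> N choose 2"
    using sparse_edges_int_le[of "N + r2"] choose_two_int[of N] by linarith
  moreover have "r1 choose 2 \<le> (r1 + r2) choose 2"
    by (rule binomial_right_mono) simp
  ultimately show ?thesis by simp
qed

lemma exchange_clique_sparse_carry:
  assumes "r1 < N" "N \<le> r1 + r2"
  shows "(r1 choose 2) + sparse_edges (N + r2) \<le> (N choose 2) + sparse_edges (N + (r1 + r2 - N))"
proof -
  have "1 * 1 \<le> (int N - int r1) * (int r1 + 3)"
    using assms(1) by (intro mult_mono) auto
  moreover have "int N * (int N - 1) - int r1 * (int r1 - 1) - (int N - 4) * (int N - int r1)
      = (int N - int r1) * (int r1 + 3)"
    by (simp add: algebra_simps)
  moreover have "(int N - 4) * int (N + r2) - (int N - 4) * int (N + (r1 + r2 - N))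
      = (int N - 4) * (int N - int r1)"
    using assms(2) by (simp add: algebra_simps of_nat_diff)
  ultimately have "2 * int (r1 choose 2) + 2 * int (sparse_edges (N + r2))
      \<le> 2 * int (N choose 2) + 2 * int (sparse_edges (N + (r1 + r2 - N)))"
    using sparse_edges_int_le[of "N + r2"] sparse_edges_int_ge[of "N + (r1 + r2 - N)"]
    unfolding choose_two_int by linarith
  then show ?thesis by simp
qed

lemma exchange_sparse_sparse:
  "sparse_edges (N + r1) + sparse_edges (N + r2) \<le> (N choose 2) + sparse_edges (N + r1 + r2)"
proof -
  have "(int N - 4) * int (N + r1) + (int N - 4) * int (N + r2) - (int N - 4) * int (N + r1 + r2)
      = int N * (int N - 1) - 3 * int N"
    by (simp add: algebra_simps)
  then have "2 * int (sparse_edges (N + r1)) + 2 * int (sparse_edges (N + r2))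
      \<le> 2 * int (N choose 2) + 2 * int (sparse_edges (N + r1 + r2))"
    using sparse_edges_int_le[of "N + r1"] sparse_edges_int_le[of "N + r2"]
      sparse_edges_int_ge[of "N + r1 + r2"] four_le_N
    unfolding choose_two_int by linarith
  then show ?thesis by simp
qed

lemma exchange_sparse_sparse_carry:
  assumes "N \<le> r1 + r2"
  shows "sparse_edges (N + r1) + sparse_edges (N + r2)
    \<le> 2 * (N choose 2) + sparse_edges (N + (r1 + r2 - N))"
proof -
  have "(int N - 4) * int (N + r1) + (int N - 4) * int (N + r2)
      - (int N - 4) * int (N + (r1 + r2 - N)) = 2 * (int N * (int N - 1)) - 6 * int N"
    using assms by (simp add: algebra_simps of_nat_diff)
  then have "2 * int (sparse_edges (N + r1)) + 2 * int (sparse_edges (N + r2))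
      \<le> 2 * (2 * int (N choose 2)) + 2 * int (sparse_edges (N + (r1 + r2 - N)))"
    using sparse_edges_int_le[of "N + r1"] sparse_edges_int_le[of "N + r2"]
      sparse_edges_int_ge[of "N + (r1 + r2 - N)"] four_le_N
    unfolding choose_two_int by linarith
  then show ?thesis by simp
qed

lemma sparse_edges_le_mixed:
  assumes "1 \<le> k"
  shows "sparse_edges (k * N + r) \<le> (k - 1) * (N choose 2) + sparse_edges (N + r)"
proof (cases "k = 1")
  case False
  then obtain j where k: "k = Suc j" "1 \<le> j" using assms by (cases k) auto
  have "(int N - 4) * int (k * N + r) - (int N - 4) * int (N + r)
      = int j * (int N * (int N - 1)) - 3 * (int j * int N)"
    unfolding k by (simp add: algebra_simps)
  moreover have "1 * 1 \<le> int j * int N" using k(2) four_le_N by (intro mult_mono) auto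
  ultimately have "2 * int (sparse_edges (k * N + r))
      \<le> int j * (2 * int (N choose 2)) + 2 * int (sparse_edges (N + r))"
    using sparse_edges_int_le[of "k * N + r"] sparse_edges_int_ge[of "N + r"]
    unfolding choose_two_int by linarith
  then have "int (sparse_edges (k * N + r)) \<le> int (j * (N choose 2) + sparse_edges (N + r))"
    by simp
  then show ?thesis unfolding k by (simp only: of_nat_le_iff diff_Suc_1)
qed simp

lemma N_pos: "0 < N" using four_le_N by simp

lemma div_mod_decomp:
  obtains k r where "p = k * N + r" "r < N"
  using N_pos by (metis div_mult_mod_eq mod_less_divisor)

lemma div_mod_eq: "r < N \<Longrightarrow> (k * N + r) div N = k \<and> (k * N + r) mod N = r"
  using N_pos by simp

lemma clique_edges_eq: "r < N \<Longrightarrow> clique_edges (k * N + r) = k * (N choose 2) + (r choose 2)"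
  unfolding clique_edges_def using div_mod_eq by simp

lemma mixed_edges_eq:
  "r < N \<Longrightarrow> mixed_edges (Suc j * N + r) = j * (N choose 2) + sparse_edges (N + r)"
  unfolding mixed_edges_def using div_mod_eq[of r "Suc j"] by simp

lemma mixed_edges_less: "p < N \<Longrightarrow> mixed_edges p = 0"
  unfolding mixed_edges_def by simp

lemma le_phiI: "x \<le> clique_edges p \<or> x \<le> mixed_edges p \<Longrightarrow> x \<le> phi p"
  unfolding phi_def by auto

lemma clique_clique_le_phi: "clique_edges a + clique_edges b \<le> phi (a + b)"
proof -
  obtain k1 r1 where a: "a = k1 * N + r1" "r1 < N" by (rule div_mod_decomp)
  obtain k2 r2 where b: "b = k2 * N + r2" "r2 < N" by (rule div_mod_decomp)
  have "clique_edges a + clique_edges b = (k1 + k2) * (N choose 2) + ((r1 choose 2) + (r2 choose 2))"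
    unfolding a(1) b(1) clique_edges_eq[OF a(2)] clique_edges_eq[OF b(2)] by (simp add: algebra_simps)
  moreover consider "r1 + r2 < N" | "N \<le> r1 + r2" "r1 + r2 - N < N"
    using a(2) b(2) by linarith
  then have "(k1 + k2) * (N choose 2) + ((r1 choose 2) + (r2 choose 2)) \<le> clique_edges (a + b)"
  proof cases
    case 1
    have ab: "a + b = (k1 + k2) * N + (r1 + r2)" using a b by (simp add: algebra_simps)
    show ?thesis unfolding ab clique_edges_eq[OF 1] using choose_two_add_le[of r1 r2] by simp
  next
    case 2
    have ab: "a + b = Suc (k1 + k2) * N + (r1 + r2 - N)" using a b 2 by (simp add: algebra_simps)
    show ?thesis unfolding ab clique_edges_eq[OF 2(2)]
      using choose_two_exchange[of r1 N r2] a(2) b(2) 2(1) by simp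
  qed
  ultimately show ?thesis by (intro le_phiI) simp
qed

lemma clique_mixed_le_phi: "clique_edges a + mixed_edges b \<le> phi (a + b)"
proof -
  obtain k1 r1 where a: "a = k1 * N + r1" "r1 < N" by (rule div_mod_decomp)
  obtain k2 r2 where b: "b = k2 * N + r2" "r2 < N" by (rule div_mod_decomp)
  show ?thesis
  proof (cases k2)
    case 0
    then show ?thesis using clique_clique_le_phi[of a b] b mixed_edges_less by simp
  next
    case (Suc j)
    have sum: "clique_edges a + mixed_edges b
        = (k1 + j) * (N choose 2) + ((r1 choose 2) + sparse_edges (N + r2))"
      unfolding a(1) b(1) Suc clique_edges_eq[OF a(2)] mixed_edges_eq[OF b(2)]
      by (simp add: algebra_simps)
    consider "r1 + r2 < N" | "N \<le> r1 + r2" "r1 + r2 - N < N"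
      using a(2) b(2) by linarith
    then show ?thesis
    proof cases
      case 1
      have ab: "a + b = Suc (k1 + j) * N + (r1 + r2)" using a b Suc by (simp add: algebra_simps)
      have "clique_edges (a + b) = (k1 + j) * (N choose 2) + ((N choose 2) + ((r1 + r2) choose 2))"
        "mixed_edges (a + b) = (k1 + j) * (N choose 2) + sparse_edges (N + r1 + r2)"
        unfolding ab clique_edges_eq[OF 1] mixed_edges_eq[OF 1] by (simp_all add: add_ac)
      then show ?thesis using sum exchange_clique_sparse[OF 1] by (intro le_phiI) auto
    next
      case 2
      have ab: "a + b = Suc (Suc (k1 + j)) * N + (r1 + r2 - N)" using a b Suc 2(1)
        by (simp add: algebra_simps)
      have "mixed_edges (a + b)
          = (k1 + j) * (N choose 2) + ((N choose 2) + sparse_edges (N + (r1 + r2 - N)))"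
        unfolding ab mixed_edges_eq[OF 2(2)] by simp
      then show ?thesis using sum exchange_clique_sparse_carry[OF a(2) 2(1)] by (intro le_phiI) auto
    qed
  qed
qed

lemma mixed_mixed_le_phi: "mixed_edges a + mixed_edges b \<le> phi (a + b)"
proof -
  obtain k1 r1 where a: "a = k1 * N + r1" "r1 < N" by (rule div_mod_decomp)
  obtain k2 r2 where b: "b = k2 * N + r2" "r2 < N" by (rule div_mod_decomp)
  show ?thesis
  proof (cases "k1 = 0 \<or> k2 = 0")
    case True
    then show ?thesis
      using clique_mixed_le_phi[of a b] clique_mixed_le_phi[of b a] a b mixed_edges_less
      by (auto simp: add.commute)
  next
    case False
    then obtain j1 j2 where k: "k1 = Suc j1" "k2 = Suc j2" by (meson not0_implies_Suc)
    have sum: "mixed_edges a + mixed_edges b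
        = (j1 + j2) * (N choose 2) + (sparse_edges (N + r1) + sparse_edges (N + r2))"
      unfolding a(1) b(1) k mixed_edges_eq[OF a(2)] mixed_edges_eq[OF b(2)]
      by (simp add: algebra_simps)
    consider "r1 + r2 < N" | "N \<le> r1 + r2" "r1 + r2 - N < N"
      using a(2) b(2) by linarith
    then show ?thesis
    proof cases
      case 1
      have ab: "a + b = Suc (Suc (j1 + j2)) * N + (r1 + r2)" using a b k by (simp add: algebra_simps)
      have "mixed_edges (a + b)
          = (j1 + j2) * (N choose 2) + ((N choose 2) + sparse_edges (N + r1 + r2))"
        unfolding ab mixed_edges_eq[OF 1] by (simp add: add_ac)
      then show ?thesis using sum exchange_sparse_sparse[of r1 r2] by (intro le_phiI) auto
    next
      case 2
      have ab: "a + b = Suc (Suc (Suc (j1 + j2))) * N + (r1 + r2 - N)" using a b k 2(1)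
        by (simp add: algebra_simps)
      have "mixed_edges (a + b)
          = (j1 + j2) * (N choose 2) + (2 * (N choose 2) + sparse_edges (N + (r1 + r2 - N)))"
        unfolding ab mixed_edges_eq[OF 2(2)] by (simp add: algebra_simps)
      then show ?thesis using sum exchange_sparse_sparse_carry[OF 2(1)] by (intro le_phiI) auto
    qed
  qed
qed

lemma phi_superadditive: "phi a + phi b \<le> phi (a + b)"
  using clique_clique_le_phi[of a b] clique_mixed_le_phi[of a b] clique_mixed_le_phi[of b a]
    mixed_mixed_le_phi[of a b]
  unfolding phi_def[of a] phi_def[of b] by (auto simp: add.commute max_def)

lemma choose_two_le_phi: "p \<le> N \<Longrightarrow> p choose 2 \<le> phi p"
  using clique_edges_eq[of 0 1] clique_edges_eq[of p 0] N_pos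
  by (intro le_phiI) (cases "p = N"; simp)

lemma sparse_edges_le_phi: "N < p \<Longrightarrow> sparse_edges p \<le> phi p"
proof -
  assume "N < p"
  obtain k r where p: "p = k * N + r" "r < N" by (rule div_mod_decomp)
  with \<open>N < p\<close> obtain j where "k = Suc j" by (cases k) auto
  then show ?thesis
    using sparse_edges_le_mixed[of k r] p mixed_edges_eq by (intro le_phiI) simp
qed

lemma phi_closed_form:
  assumes r: "r < N" and k: "1 \<le> k"
  shows "real (phi (k * N + r)) = (real (N - 1) * real (k * N + r) - real r * (real N - real r)) / 2
    + real_of_int (max 0 \<lfloor>(real r * (real N - 3 - real r) - 3 * real N) / 2\<rfloor>)"
proof -
  define A where "A = clique_edges (k * N + r)"
  define B where "B = mixed_edges (k * N + r)"
  define Y :: int where "Y = int r * (int N - 3 - int r) - 3 * int N"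
  have "2 * int A = int k * (2 * int (N choose 2)) + 2 * int (r choose 2)"
    unfolding A_def clique_edges_eq[OF r] by (simp add: algebra_simps)
  then have A: "2 * int A = int k * (int N * (int N - 1)) + int r * (int r - 1)"
    unfolding choose_two_int .
  have "int B = int A + Y div 2"
  proof -
    obtain j where j: "k = Suc j" using k by (cases k) auto
    have "int (sparse_edges (N + r)) = (int N - 4) * int (N + r) div 2"
      unfolding sparse_edges_def using four_le_N by (simp add: zdiv_int of_nat_diff)
    also have "(int N - 4) * int (N + r) = Y + 2 * (int (N choose 2) + int (r choose 2))"
      unfolding Y_def distrib_left choose_two_int by (simp add: algebra_simps)
    finally have "int (sparse_edges (N + r)) = int (N choose 2) + int (r choose 2) + Y div 2"
      by simp
    then show ?thesis unfolding A_def B_def j clique_edges_eq[OF r] mixed_edges_eq[OF r]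
      by (simp add: algebra_simps)
  qed
  then have "real (phi (k * N + r)) = real A + real_of_int (max 0 (Y div 2))"
    unfolding phi_def A_def[symmetric] B_def[symmetric] by (cases "A \<le> B") (auto simp: max_def)
  moreover have "real r * (real N - 3 - real r) - 3 * real N = real_of_int Y"
    unfolding Y_def by simp
  moreover have "\<lfloor>real_of_int Y / 2\<rfloor> = Y div 2"
    using floor_divide_of_int_eq[of Y 2] by simp
  moreover have "2 * real A = real (N - 1) * real (k * N + r) - real r * (real N - real r)"
    using arg_cong[OF A, of real_of_int] four_le_N by (simp add: of_nat_diff algebra_simps)
  ultimately show ?thesis by simp
qed

end

context extremal_function
begin

context
  fixes VL :: "'b set" and EL :: "'b set set"
  assumes simple: "simple_graph VL EL" and connected: "connected_graph VL EL"
    and nonempty: "EL \<noteq> {}"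
begin

lemma ex_le_phi:
  assumes "\<forall>m>N. \<forall>E\<in>Ex m VL EL. connected_graph {0..<m} E \<longrightarrow> max_degree {0..<m} E \<le> N - 4"
  shows "ex p VL EL \<le> phi p"
proof (induction p rule: less_induct)
  case (less p)
  show ?case
  proof (cases "p \<le> N")
    case True
    then show ?thesis using ex_le_choose_two[OF nonempty] choose_two_le_phi le_trans by blast
  next
    case False
    then have p: "0 < p" "N < p" by simp_all
    then have deg: "\<forall>E\<in>Ex p VL EL. connected_graph {0..<p} E \<longrightarrow> max_degree {0..<p} E \<le> N - 4"
      using assms by simp
    consider (sparse) "2 * ex p VL EL \<le> p * (N - 4)"
      | (split) a b where "0 < a" "0 < b" "a + b = p" "ex p VL EL \<le> ex a VL EL + ex b VL EL"
      using extremal_sparse_or_split[OF nonempty p(1) deg] by blast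
    then show ?thesis
    proof cases
      case sparse
      then have "ex p VL EL \<le> sparse_edges p" unfolding sparse_edges_def by (simp add: mult.commute)
      then show ?thesis using sparse_edges_le_phi[OF p(2)] by simp
    next
      case (split a b)
      then have "ex p VL EL \<le> phi a + phi b" using less[of a] less[of b] by simp
      also have "\<dots> \<le> phi p" using phi_superadditive[of a b] split by simp
      finally show ?thesis .
    qed
  qed
qed

lemma phi_le_ex:
  assumes card: "card VL = Suc N" and v: "v \<in> VL" "N - 4 < degree VL EL v"
  shows "phi p \<le> ex p VL EL"
proof -
  obtain k r where p: "p = k * N + r" "r < N" by (rule div_mod_decomp)
  have clique_N: "N choose 2 \<le> ex N VL EL" and clique_r: "r choose 2 \<le> ex r VL EL"
    using card p(2) by (auto intro!: choose_two_le_ex)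
  have "clique_edges p \<le> k * ex N VL EL + ex r VL EL"
    unfolding p(1) clique_edges_eq[OF p(2)] using clique_N clique_r by (simp add: add_mono)
  also have "\<dots> \<le> ex (k * N) VL EL + ex r VL EL"
    using ex_mult_le[OF simple connected nonempty] by simp
  also have "\<dots> \<le> ex p VL EL"
    unfolding p(1) by (rule ex_superadditive[OF simple connected nonempty])
  finally have clique: "clique_edges p \<le> ex p VL EL" .
  have "mixed_edges p \<le> ex p VL EL"
  proof (cases k)
    case 0
    then show ?thesis using p mixed_edges_less by simp
  next
    case (Suc j)
    have "sparse_edges (N + r) \<le> ex (N + r) VL EL"
      unfolding sparse_edges_def by (rule sparse_le_ex[OF _ v]) (use four_le_N in simp)
    then have "mixed_edges p \<le> j * ex N VL EL + ex (N + r) VL EL"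
      unfolding p(1) Suc mixed_edges_eq[OF p(2)] using clique_N by (simp add: add_mono)
    also have "\<dots> \<le> ex (j * N) VL EL + ex (N + r) VL EL"
      using ex_mult_le[OF simple connected nonempty] by simp
    also have "\<dots> \<le> ex p VL EL"
      unfolding p(1) Suc using ex_superadditive[OF simple connected nonempty, of "j * N" "N + r"]
      by (simp add: add_ac)
    finally show ?thesis .
  qed
  with clique show ?thesis unfolding phi_def by simp
qed

end

end

theorem lemma2p10:
  fixes n p k r :: nat and VT :: "'a set" and ET :: "'a set set"
  assumes "n \<ge> 10"
    and "is_tree VT ET" and "card VT = n" and "max_degree VT ET = n - 4"
    and "\<forall>m\<ge>n. \<forall>E\<in>Ex m VT ET. connected_graph {0..<m} E \<longrightarrow> max_degree {0..<m} E \<le> n - 5"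
    and "p = k * (n - 1) + r" and "r \<le> n - 2" and "p \<ge> n - 1"
  shows "real (ex p VT ET) =
     (real (n - 2) * real p - real r * (real n - 1 - real r)) / 2
     + real_of_int (max 0 \<lfloor>(real r * (real n - 4 - real r) - 3 * (real n - 1)) / 2\<rfloor>)"
proof -
  define N where "N = n - 1"
  have n: "n = Suc N" and r: "r < N" and p: "p = k * N + r"
    using assms(1,6,7) unfolding N_def by auto
  have k: "1 \<le> k"
    using assms(8) r unfolding p n by (cases k) auto
  interpret extremal_function N using assms(1) unfolding N_def by unfold_locales simp
  have tree: "simple_graph VT ET" "connected_graph VT ET" "ET \<noteq> {}"
    using assms(1-3) unfolding is_tree_def by auto
  obtain v where v: "v \<in> VT" "degree VT ET v = n - 4"
    using max_degree_attained[of VT ET] tree(1,2) assms(4)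
    unfolding simple_graph_def connected_graph_def by metis
  have "ex p VT ET \<le> phi p"
    using ex_le_phi[OF tree] assms(5) unfolding n by (simp add: Suc_le_eq)
  moreover have "phi p \<le> ex p VT ET"
    using phi_le_ex[OF tree _ v(1)] v(2) assms(1,3) unfolding n by simp
  ultimately have "ex p VT ET = phi (k * N + r)" unfolding p by simp
  then show ?thesis
    using phi_closed_form[OF r k] unfolding n p by (simp add: algebra_simps)
qed

end
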